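(* For a concrete category $|\text{-}|:\mathcal E\to\mathcal B$, the following are equivalent: (i) $\mathcal E$ is topological over $\mathcal B$; (ii) the $\mathcal Q_{\mathcal B}$-category $\overline{\mathcal E}$ is tensored and conically cocomplete; (iii) $\mathcal E$ is cofibred over $\mathcal B$ and $\overline{\mathcal E}$ is conically cocomplete.
   Context: $\mathcal B$ has small hom-sets; $|\text{-}|$ is faithful; a map $f:|X|\to|Y|$ is an $\mathcal E$-morphism if it equals $|f'|$ for some $f':X\to Y$; $\overline{\mathcal E}(X,Y)$ is the set of these. A structured sink over $T$ is a (possibly large) family of maps $f_i:|X_i|\to T$; a final lifting is $Y$ with $|Y|=T$ such that all $f_i$ are $\mathcal E$-morphisms and $g:T\to|Z|$ is an $\mathcal E$-morphism $Y\to Z$ whenever all $g\circ f_i$ are $\mathcal E$-morphisms; $\mathcal E$ is topological if all structured sinks have final liftings, and cofibred if all one-element structured sinks $f:|X|\to T$ have final liftings. For $\mathbf f\subseteq\mathcal B(S,T)$, $\mathbf h\subseteq\mathcal B(S,U)$ let $\mathbf h\swarrow\mathbf f=\{g\mid\forall f\in\mathbf f:g\circ f\in\mathbf h\}$. $\overline{\mathcal E}$ is tensored if for all $X$ and all subsets $\mathbf u\subseteq\mathcal B(|X|,T)$ there is $Y$ with $|Y|=T$ and $\overline{\mathcal E}(Y,Z)=\overline{\mathcal E}(X,Z)\swarrow\mathbf u$ for all $Z$. A presheaf of extent $T$ is a family $\varphi_X\subseteq\mathcal B(|X|,T)$ with $\varphi_X\circ\overline{\mathcal E}(X',X)\subseteq\varphi_{X'}$;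 a supremum is $Y$ with $|Y|=T$ and $\overline{\mathcal E}(Y,Z)=\bigcap_X\overline{\mathcal E}(X,Z)\swarrow\varphi_X$ for all $Z$. $\overline{\mathcal E}$ is conically cocomplete if for every $T$ and every family $(Y_i)$ of objects with $|Y_i|=T$ the presheaf $X\mapsto\bigcup_i\overline{\mathcal E}(X,Y_i)$ has a supremum. *)

theory Defs
  imports Main
begin

text \<open>The base category B: all elements of type 'b are objects; arrows are the
elements of Arr with domain/codomain, composition cmp g f (= g after f) and identities.
Hom-sets are sets, hence small.\<close>

definition Hom :: "'m set \<Rightarrow> ('m \<Rightarrow> 'b) \<Rightarrow> ('m \<Rightarrow> 'b) \<Rightarrow> 'b \<Rightarrow> 'b \<Rightarrow> 'm set" where
  "Hom Arr dm cd S T = {f \<in> Arr. dm f = S \<and> cd f = T}"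

definition category :: "'m set \<Rightarrow> ('m \<Rightarrow> 'b) \<Rightarrow> ('m \<Rightarrow> 'b) \<Rightarrow> ('m \<Rightarrow> 'm \<Rightarrow> 'm) \<Rightarrow> ('b \<Rightarrow> 'm) \<Rightarrow> bool" where
  "category Arr dm cd cmp ident \<longleftrightarrow>
     (\<forall>S. ident S \<in> Hom Arr dm cd S S) \<and>
     (\<forall>S T U f g. f \<in> Hom Arr dm cd S T \<longrightarrow> g \<in> Hom Arr dm cd T U \<longrightarrow> cmp g f \<in> Hom Arr dm cd S U) \<and>
     (\<forall>f\<in>Arr. cmp (ident (cd f)) f = f \<and> cmp f (ident (dm f)) = f) \<and>
     (\<forall>f g h. f \<in> Arr \<longrightarrow> g \<in> Arr \<longrightarrow> h \<in> Arr \<longrightarrow> dm g = cd f \<longrightarrow> dm h = cd g \<longrightarrow>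
        cmp h (cmp g f) = cmp (cmp h g) f)"

text \<open>A concrete category over B: objects are the elements of type 'e, U X = |X|, and
Em X Y = \<open>\<overline>E\<close>(X,Y) is the set of B-maps |X| \<rightarrow> |Y| that are E-morphisms
(i.e. images of E-morphisms under the faithful functor |-|).  Faithfulness lets us
identify E(X,Y) with this set.\<close>

definition concrete_cat where
  "concrete_cat Arr dm cd cmp ident (U :: 'e \<Rightarrow> 'b) (Em :: 'e \<Rightarrow> 'e \<Rightarrow> 'm set) \<longleftrightarrow>
     category Arr dm cd cmp ident \<and>
     (\<forall>X Y. Em X Y \<subseteq> Hom Arr dm cd (U X) (U Y)) \<and>
     (\<forall>X. ident (U X) \<in> Em X X) \<and>
     (\<forall>X Y Z f g. f \<in> Em X Y \<longrightarrow> g \<in> Em Y Z \<longrightarrow> cmp g f \<in> Em X Z)"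

definition structured_sink where
  "structured_sink Arr dm cd U T (sink :: ('e \<times> 'm) set) \<longleftrightarrow>
     (\<forall>(X, f) \<in> sink. f \<in> Hom Arr dm cd (U X) T)"

definition final_lifting where
  "final_lifting Arr dm cd cmp U Em T sink Y \<longleftrightarrow>
     U Y = T \<and>
     (\<forall>(X, f) \<in> sink. f \<in> Em X Y) \<and>
     (\<forall>Z g. g \<in> Hom Arr dm cd T (U Z) \<longrightarrow> (\<forall>(X, f) \<in> sink. cmp g f \<in> Em X Z) \<longrightarrow> g \<in> Em Y Z)"

definition topological where
  "topological Arr dm cd cmp U Em \<longleftrightarrow>
     (\<forall>T sink. structured_sink Arr dm cd U T sink \<longrightarrow> (\<exists>Y. final_lifting Arr dm cd cmp U Em T sink Y))"

definition cofibred where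
  "cofibred Arr dm cd cmp U Em \<longleftrightarrow>
     (\<forall>T X f. f \<in> Hom Arr dm cd (U X) T \<longrightarrow> (\<exists>Y. final_lifting Arr dm cd cmp U Em T {(X, f)} Y))"

text \<open>Right extension h \<swarrow> f for f \<subseteq> B(S,T), h \<subseteq> B(S,V): maps g : T \<rightarrow> V with g\<circ>f \<in> h for all f.\<close>

definition lext where
  "lext Arr dm cd cmp hs fs T V = {g \<in> Hom Arr dm cd T V. \<forall>f \<in> fs. cmp g f \<in> hs}"

definition tensored where
  "tensored Arr dm cd cmp U Em \<longleftrightarrow>
     (\<forall>X T u. u \<subseteq> Hom Arr dm cd (U X) T \<longrightarrow>
        (\<exists>Y. U Y = T \<and> (\<forall>Z. Em Y Z = lext Arr dm cd cmp (Em X Z) u T (U Z))))"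

definition presheaf where
  "presheaf Arr dm cd cmp U Em T (\<phi> :: 'e \<Rightarrow> 'm set) \<longleftrightarrow>
     (\<forall>X. \<phi> X \<subseteq> Hom Arr dm cd (U X) T) \<and>
     (\<forall>X X' f h. f \<in> \<phi> X \<longrightarrow> h \<in> Em X' X \<longrightarrow> cmp f h \<in> \<phi> X')"

definition supremum where
  "supremum Arr dm cd cmp U Em T \<phi> Y \<longleftrightarrow>
     U Y = T \<and> (\<forall>Z. Em Y Z = (\<Inter>X. lext Arr dm cd cmp (Em X Z) (\<phi> X) T (U Z)))"

text \<open>Conically cocomplete: for every T and every family (Y_i) of objects over T
(represented by its set of members; repetitions are irrelevant) the presheaf
X \<mapsto> \<Union>_i \<overline>E(X,Y_i) has a supremum.\<close>

definition conically_cocomplete where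
  "conically_cocomplete Arr dm cd cmp U Em \<longleftrightarrow>
     (\<forall>T (Ys :: 'e set). (\<forall>Y\<in>Ys. U Y = T) \<longrightarrow>
        (\<exists>S. supremum Arr dm cd cmp U Em T (\<lambda>X. \<Union>Y\<in>Ys. Em X Y) S))"

end

theory Submission
  imports Defs
begin

text \<open>All three conditions are statements about final liftings.  An object Y over T is a
final lifting of a structured sink exactly when \<open>\<overline>E\<close>(Y,Z) consists of the maps
T \<rightarrow> |Z| that turn every member of the sink into an E-morphism; tensors are final liftings
of sinks with a single domain, suprema of presheaves are final liftings of the sink of all
their elements, and cofibredness provides final liftings of one-element sinks.  An arbitrary
sink is then lifted by lifting its members one at a time and taking the supremum of the
resulting objects: by the Yoneda argument a map out of that supremum is an E-morphism iff it
is one out of each lifted member.\<close>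

definition sink_lext where
  "sink_lext Arr dm cd cmp U Em T sink Z =
     {g \<in> Hom Arr dm cd T (U Z). \<forall>(X, f) \<in> sink. cmp g f \<in> Em X Z}"

lemma concrete_catD:
  assumes "concrete_cat Arr dm cd cmp ident U Em"
  shows "Em X Y \<subseteq> Hom Arr dm cd (U X) (U Y)"
    and "ident (U X) \<in> Em X X"
    and "f \<in> Em X Y \<Longrightarrow> g \<in> Em Y Z \<Longrightarrow> cmp g f \<in> Em X Z"
    and "f \<in> Hom Arr dm cd S T \<Longrightarrow> cmp (ident T) f = f"
    and "f \<in> Hom Arr dm cd S T \<Longrightarrow> cmp f (ident S) = f"
  using assms unfolding concrete_cat_def category_def Hom_def by auto

lemma final_lifting_iff:
  assumes cc: "concrete_cat Arr dm cd cmp ident U Em"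
    and sink: "structured_sink Arr dm cd U T sink"
  shows "final_lifting Arr dm cd cmp U Em T sink Y \<longleftrightarrow>
           U Y = T \<and> (\<forall>Z. Em Y Z = sink_lext Arr dm cd cmp U Em T sink Z)"
proof
  assume Y: "final_lifting Arr dm cd cmp U Em T sink Y"
  then show "U Y = T \<and> (\<forall>Z. Em Y Z = sink_lext Arr dm cd cmp U Em T sink Z)"
    using concrete_catD(1,3)[OF cc] unfolding final_lifting_def sink_lext_def by blast
next
  assume Y: "U Y = T \<and> (\<forall>Z. Em Y Z = sink_lext Arr dm cd cmp U Em T sink Z)"
  have "f \<in> Em X Y" if "(X, f) \<in> sink" for X f
  proof -
    have "ident T \<in> sink_lext Arr dm cd cmp U Em T sink Y"
      using Y concrete_catD(2)[OF cc, of Y] by metis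
    then have "cmp (ident T) f \<in> Em X Y" using that unfolding sink_lext_def by blast
    moreover have "f \<in> Hom Arr dm cd (U X) T"
      using sink that unfolding structured_sink_def by blast
    ultimately show ?thesis using concrete_catD(4)[OF cc] by metis
  qed
  with Y show "final_lifting Arr dm cd cmp U Em T sink Y"
    unfolding final_lifting_def sink_lext_def by blast
qed

lemma lext_eq_sink_lext:
  "lext Arr dm cd cmp (Em X Z) u T (U Z) = sink_lext Arr dm cd cmp U Em T ({X} \<times> u) Z"
  unfolding lext_def sink_lext_def by blast

lemma INT_lext_eq_sink_lext:
  "(\<Inter>X. lext Arr dm cd cmp (Em X Z) (\<phi> X) T (U Z)) =
     sink_lext Arr dm cd cmp U Em T (SIGMA X:UNIV. \<phi> X) Z"
  unfolding lext_def sink_lext_def by blast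

lemma supremum_iff_final_lifting:
  assumes cc: "concrete_cat Arr dm cd cmp ident U Em"
    and \<phi>: "\<And>X. \<phi> X \<subseteq> Hom Arr dm cd (U X) T"
  shows "supremum Arr dm cd cmp U Em T \<phi> Y \<longleftrightarrow>
           final_lifting Arr dm cd cmp U Em T (SIGMA X:UNIV. \<phi> X) Y"
proof -
  have "structured_sink Arr dm cd U T (SIGMA X:UNIV. \<phi> X)"
    using \<phi> unfolding structured_sink_def by blast
  then show ?thesis
    unfolding supremum_def INT_lext_eq_sink_lext by (simp add: final_lifting_iff[OF cc])
qed

lemma sink_lext_of_represented:
  assumes cc: "concrete_cat Arr dm cd cmp ident U Em"
    and Ys: "\<forall>Y\<in>Ys. U Y = T"
  shows "sink_lext Arr dm cd cmp U Em T (SIGMA X:UNIV. \<Union>Y\<in>Ys. Em X Y) Z =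
           {g \<in> Hom Arr dm cd T (U Z). \<forall>Y\<in>Ys. g \<in> Em Y Z}"
proof -
  have "g \<in> Em Y Z \<longleftrightarrow> (\<forall>X. \<forall>h\<in>Em X Y. cmp g h \<in> Em X Z)"
    if g: "g \<in> Hom Arr dm cd T (U Z)" and Y: "Y \<in> Ys" for g Y
  proof
    assume "\<forall>X. \<forall>h\<in>Em X Y. cmp g h \<in> Em X Z"
    then have "cmp g (ident T) \<in> Em Y Z"
      using concrete_catD(2)[OF cc, of Y] Ys Y by auto
    then show "g \<in> Em Y Z" using concrete_catD(5)[OF cc g] by simp
  qed (use concrete_catD(3)[OF cc] in blast)
  then show ?thesis
    unfolding sink_lext_def by fastforce
qed

lemma topological_imp_tensored:
  assumes cc: "concrete_cat Arr dm cd cmp ident U Em"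
    and top: "topological Arr dm cd cmp U Em"
  shows "tensored Arr dm cd cmp U Em"
  unfolding tensored_def lext_eq_sink_lext
proof (intro allI impI)
  fix X T u assume "u \<subseteq> Hom Arr dm cd (U X) T"
  then have sink: "structured_sink Arr dm cd U T ({X} \<times> u)"
    unfolding structured_sink_def by blast
  then show "\<exists>Y. U Y = T \<and> (\<forall>Z. Em Y Z = sink_lext Arr dm cd cmp U Em T ({X} \<times> u) Z)"
    using top final_lifting_iff[OF cc sink] unfolding topological_def by blast
qed

lemma topological_imp_conically_cocomplete:
  assumes cc: "concrete_cat Arr dm cd cmp ident U Em"
    and top: "topological Arr dm cd cmp U Em"
  shows "conically_cocomplete Arr dm cd cmp U Em"
  unfolding conically_cocomplete_def
proof (intro allI impI)
  fix T Ys assume "\<forall>Y\<in>Ys. U Y = T"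
  then have \<phi>: "(\<Union>Y\<in>Ys. Em X Y) \<subseteq> Hom Arr dm cd (U X) T" for X
    using concrete_catD(1)[OF cc] by fastforce
  then have "structured_sink Arr dm cd U T (SIGMA X:UNIV. \<Union>Y\<in>Ys. Em X Y)"
    unfolding structured_sink_def by blast
  then show "\<exists>S. supremum Arr dm cd cmp U Em T (\<lambda>X. \<Union>Y\<in>Ys. Em X Y) S"
    using top supremum_iff_final_lifting[OF cc \<phi>] unfolding topological_def by blast
qed

lemma tensored_imp_cofibred:
  assumes cc: "concrete_cat Arr dm cd cmp ident U Em"
    and tens: "tensored Arr dm cd cmp U Em"
  shows "cofibred Arr dm cd cmp U Em"
  unfolding cofibred_def
proof (intro allI impI)
  fix T X f assume f: "f \<in> Hom Arr dm cd (U X) T"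
  then have sink: "structured_sink Arr dm cd U T ({X} \<times> {f})"
    unfolding structured_sink_def by blast
  obtain Y where "U Y = T" "\<And>Z. Em Y Z = sink_lext Arr dm cd cmp U Em T ({X} \<times> {f}) Z"
    using tens f unfolding tensored_def lext_eq_sink_lext by (meson empty_subsetI insert_subset)
  then have "final_lifting Arr dm cd cmp U Em T ({X} \<times> {f}) Y"
    using final_lifting_iff[OF cc sink] by blast
  then show "\<exists>Y. final_lifting Arr dm cd cmp U Em T {(X, f)} Y"
    by auto
qed

lemma cofibred_conically_cocomplete_imp_topological:
  assumes cc: "concrete_cat Arr dm cd cmp ident U Em"
    and cof: "cofibred Arr dm cd cmp U Em"
    and cocomplete: "conically_cocomplete Arr dm cd cmp U Em"
  shows "topological Arr dm cd cmp U Em"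
  unfolding topological_def
proof (intro allI impI)
  fix T sink assume sink: "structured_sink Arr dm cd U T sink"
  have single: "structured_sink Arr dm cd U T {p}" if "p \<in> sink" for p
    using sink that unfolding structured_sink_def by blast
  have "\<forall>p\<in>sink. \<exists>Y. final_lifting Arr dm cd cmp U Em T {p} Y"
    using sink cof unfolding structured_sink_def cofibred_def by fast
  then obtain F where F: "\<And>p. p \<in> sink \<Longrightarrow> final_lifting Arr dm cd cmp U Em T {p} (F p)"
    by metis
  have over_T: "\<forall>Y\<in>F ` sink. U Y = T"
    using F unfolding final_lifting_def by blast
  have EF: "Em (F p) Z = sink_lext Arr dm cd cmp U Em T {p} Z" if "p \<in> sink" for p Z
    using F[OF that] final_lifting_iff[OF cc single[OF that]] by blast
  let ?\<phi> = "\<lambda>X. \<Union>Y\<in>F ` sink. Em X Y"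
  obtain S where S: "supremum Arr dm cd cmp U Em T ?\<phi> S"
    using cocomplete over_T unfolding conically_cocomplete_def by blast
  have \<phi>: "?\<phi> X \<subseteq> Hom Arr dm cd (U X) T" for X
    using over_T concrete_catD(1)[OF cc] by fastforce
  then have "structured_sink Arr dm cd U T (SIGMA X:UNIV. ?\<phi> X)"
    unfolding structured_sink_def by blast
  then have S_lifts: "U S = T \<and>
      (\<forall>Z. Em S Z = sink_lext Arr dm cd cmp U Em T (SIGMA X:UNIV. ?\<phi> X) Z)"
    using S supremum_iff_final_lifting[OF cc \<phi>] final_lifting_iff[OF cc] by blast
  have "sink_lext Arr dm cd cmp U Em T (SIGMA X:UNIV. ?\<phi> X) Z =
      sink_lext Arr dm cd cmp U Em T sink Z" for Z
  proof -
    have "(\<forall>Y\<in>F ` sink. g \<in> Em Y Z) \<longleftrightarrow>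
        (\<forall>p\<in>sink. g \<in> sink_lext Arr dm cd cmp U Em T {p} Z)" for g
      using EF by auto
    then show ?thesis
      unfolding sink_lext_of_represented[OF cc over_T] unfolding sink_lext_def by blast
  qed
  with S_lifts show "\<exists>Y. final_lifting Arr dm cd cmp U Em T sink Y"
    using final_lifting_iff[OF cc sink] by auto
qed

theorem corollary5p4:
  fixes Arr :: "'m set" and dm cd :: "'m \<Rightarrow> 'b" and cmp :: "'m \<Rightarrow> 'm \<Rightarrow> 'm"
    and ident :: "'b \<Rightarrow> 'm" and U :: "'e \<Rightarrow> 'b" and Em :: "'e \<Rightarrow> 'e \<Rightarrow> 'm set"
  assumes "concrete_cat Arr dm cd cmp ident U Em"
  shows "(topological Arr dm cd cmp U Em \<longleftrightarrow>
           tensored Arr dm cd cmp U Em \<and> conically_cocomplete Arr dm cd cmp U Em) \<and>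
         (tensored Arr dm cd cmp U Em \<and> conically_cocomplete Arr dm cd cmp U Em \<longleftrightarrow>
           cofibred Arr dm cd cmp U Em \<and> conically_cocomplete Arr dm cd cmp U Em)"
  using topological_imp_tensored[OF assms] topological_imp_conically_cocomplete[OF assms]
    tensored_imp_cofibred[OF assms] cofibred_conically_cocomplete_imp_topological[OF assms]
  by blast

end
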